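(* Let $b_{10}>0$, $b_{11}\ge0$, $c_{01}\ge0$, $c_{11}\ge0$, and define $\gamma'=\frac{c_{01}}{b_{10}}$, $\delta'=\frac{b_{10}-b_{11}+c_{11}-c_{01}}{b_{10}}$. Let $\mathcal{F}=\{(P_{11},t): P_{11}\in[0,1],\ P_{11}-1\le t\le P_{11}\}$ and $\mathcal{P}=\{(P_{11},t)\in\mathcal{F}: t>\gamma'+\delta'P_{11}\}$. Then $\mathcal{P}$ contains a pair $(P_{11},t)$ with $t<0$ if and only if $c_{11}<b_{11}-b_{10}$.
   Context: Double binary causal classification: $P_{11}$ is the probability of the positive outcome under the positive treatment, $t=P_{11}-P_{10}$ the estimated individual treatment effect, $b_{ij}$ the benefit of outcome $i$ under treatment $j$ and $c_{ij}$ the cost of outcome $i$ under treatment $j$, normalized so that $c_{00}=c_{10}=0$, $b_{00}=b_{01}=0$. The cost-sensitive causal decision boundary is $t=\gamma'+\delta'P_{11}$ and $\mathcal{P}$ is the positive treatment set. *)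

theory Defs
  imports Complex_Main
begin

definition gamma' :: "real \<Rightarrow> real \<Rightarrow> real" where
  "gamma' b10 c01 = c01 / b10"

definition delta' :: "real \<Rightarrow> real \<Rightarrow> real \<Rightarrow> real \<Rightarrow> real" where
  "delta' b10 b11 c01 c11 = (b10 - b11 + c11 - c01) / b10"

definition feasible_region :: "(real \<times> real) set" where
  "feasible_region = {(p, t). 0 \<le> p \<and> p \<le> 1 \<and> p - 1 \<le> t \<and> t \<le> p}"

definition pos_treatment_set :: "real \<Rightarrow> real \<Rightarrow> real \<Rightarrow> real \<Rightarrow> (real \<times> real) set" where
  "pos_treatment_set b10 b11 c01 c11 =
     {(p, t) \<in> feasible_region. t > gamma' b10 c01 + delta' b10 b11 c01 c11 * p}"

end

theory Submission
  imports Defs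
begin

text \<open>Multiplying the boundary condition by \<open>b10 > 0\<close> turns it into
  \<open>c01 (1 - P11) + (b10 - b11 + c11) P11 < b10 t\<close>. For \<open>t < 0\<close> the left side must be negative;
  as \<open>c01 (1 - P11) \<ge> 0\<close> this forces \<open>b10 - b11 + c11 < 0\<close>. Conversely, if
  \<open>k = b11 - b10 - c11 > 0\<close>, the point \<open>(1 - \<epsilon>, -\<epsilon>)\<close> on the lower edge of the feasible region
  is in the treatment set as soon as \<open>\<epsilon> (b10 + c01 + k) < k\<close>.\<close>

lemma boundary_less_iff:
  fixes b10 b11 c01 c11 p t :: real
  assumes "b10 > 0"
  shows "gamma' b10 c01 + delta' b10 b11 c01 c11 * p < t \<longleftrightarrow>
         c01 * (1 - p) + (b10 - b11 + c11) * p < b10 * t"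
proof -
  have "gamma' b10 c01 + delta' b10 b11 c01 c11 * p = (c01 * (1 - p) + (b10 - b11 + c11) * p) / b10"
    using assms by (simp add: gamma'_def delta'_def field_simps)
  then show ?thesis
    using assms by (simp add: pos_divide_less_eq mult.commute)
qed

lemma mem_pos_treatment_set_iff:
  fixes b10 b11 c01 c11 p t :: real
  assumes "b10 > 0"
  shows "(p, t) \<in> pos_treatment_set b10 b11 c01 c11 \<longleftrightarrow>
         0 \<le> p \<and> p \<le> 1 \<and> p - 1 \<le> t \<and> t \<le> p \<and>
         c01 * (1 - p) + (b10 - b11 + c11) * p < b10 * t"
  using boundary_less_iff[OF assms]
  by (auto simp: pos_treatment_set_def feasible_region_def)

lemma net_benefit_pos_if_negative_effect_treated:
  fixes b10 b11 c01 c11 p t :: real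
  assumes "b10 > 0" and "c01 \<ge> 0"
    and "(p, t) \<in> pos_treatment_set b10 b11 c01 c11" and "t < 0"
  shows "c11 < b11 - b10"
proof (rule ccontr)
  assume "\<not> c11 < b11 - b10"
  then have "b10 - b11 + c11 \<ge> 0" by simp
  moreover have "0 \<le> p" "p \<le> 1"
    and treated: "c01 * (1 - p) + (b10 - b11 + c11) * p < b10 * t"
    using assms(3) by (simp_all add: mem_pos_treatment_set_iff[OF assms(1)])
  ultimately have "0 \<le> c01 * (1 - p) + (b10 - b11 + c11) * p"
    using \<open>c01 \<ge> 0\<close> by simp
  moreover have "b10 * t < 0"
    using assms(1,4) by (simp add: mult_pos_neg)
  ultimately show False
    using treated by linarith
qed

lemma lower_edge_point_in_pos_treatment_set:
  fixes b10 b11 c01 c11 :: real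
  defines "k \<equiv> b11 - b10 - c11"
  defines "\<epsilon> \<equiv> k / (2 * (b10 + c01 + k))"
  assumes "b10 > 0" and "c01 \<ge> 0" and "k > 0"
  shows "(1 - \<epsilon>, - \<epsilon>) \<in> pos_treatment_set b10 b11 c01 c11" and "- \<epsilon> < 0"
proof -
  have den: "b10 + c01 + k > 0"
    using assms by simp
  have \<epsilon>_pos: "\<epsilon> > 0" and \<epsilon>_le: "\<epsilon> \<le> 1"
    using assms(3-5) den by (simp_all add: \<epsilon>_def field_simps)
  have "\<epsilon> * (b10 + c01 + k) = k / 2"
    using den by (simp add: \<epsilon>_def field_simps)
  then have "\<epsilon> * (b10 + c01 + k) < k"
    using \<open>k > 0\<close> by simp
  then have "c01 * \<epsilon> - k * (1 - \<epsilon>) < - b10 * \<epsilon>"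
    by (simp add: algebra_simps)
  then have "c01 * (1 - (1 - \<epsilon>)) + (b10 - b11 + c11) * (1 - \<epsilon>) < b10 * - \<epsilon>"
    by (simp add: k_def algebra_simps)
  then show "(1 - \<epsilon>, - \<epsilon>) \<in> pos_treatment_set b10 b11 c01 c11"
    using \<epsilon>_pos \<epsilon>_le by (simp add: mem_pos_treatment_set_iff[OF \<open>b10 > 0\<close>])
  show "- \<epsilon> < 0"
    using \<epsilon>_pos by simp
qed

theorem theorem3:
  fixes b10 b11 c01 c11 :: real
  assumes "b10 > 0" and "b11 \<ge> 0" and "c01 \<ge> 0" and "c11 \<ge> 0"
  shows "(\<exists>p t. (p, t) \<in> pos_treatment_set b10 b11 c01 c11 \<and> t < 0) \<longleftrightarrow> c11 < b11 - b10"
proof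
  assume "\<exists>p t. (p, t) \<in> pos_treatment_set b10 b11 c01 c11 \<and> t < 0"
  then show "c11 < b11 - b10"
    using net_benefit_pos_if_negative_effect_treated assms(1,3) by blast
next
  assume "c11 < b11 - b10"
  then show "\<exists>p t. (p, t) \<in> pos_treatment_set b10 b11 c01 c11 \<and> t < 0"
    using lower_edge_point_in_pos_treatment_set[OF assms(1,3)] by fastforce
qed

end
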